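(* Let $\langle\mathcal X,\mathcal C,d,(x_1,\dots,x_n)\rangle$ be a facility location instance, let $q^\star$ be a population-optimal location, and for each panel $S$ let $\overline q(S)$ be a panel-optimal location. Fix $T>2$ and $\delta\in(0,1)$, and let $k\le n$ be an integer with $$k\ge\frac{2\log(1/\delta)}{\log\big(T^2/(4(T-1))\big)} .$$ Then $\mathbb P_{S\sim\mathcal U_{k,n}}\big[d(q^\star,\overline q(S))\le T\cdot\textsc{Social-Opt}\big]\ge1-\delta$.
   Context: A facility location instance $\langle\mathcal X,\mathcal C,d,(x_1,\dots,x_n)\rangle$ consists of a metric space $(\mathcal X,d)$ with $d:\mathcal X\times\mathcal X\to[0,1]$, a set of candidate locations $\mathcal C\subseteq\mathcal X$, and agent locations $x_1,\dots,x_n\in\mathcal X$. $\textsc{Social-Cost}(q)=\frac1n\sum_{i=1}^n d(q,x_i)$, $\textsc{Social-Opt}=\min_{q\in\mathcal C}\textsc{Social-Cost}(q)$, $q^\star\in\arg\min_{q\in\mathcal C}\textsc{Social-Cost}(q)$; for a panel $S\subseteq[n]$ of size $k$, $\textsc{Panel-Cost}(q,S)=\frac1k\sum_{i\in S}d(q,x_i)$ and $\overline q(S)\in\arg\min_{q\in\mathcal C}\textsc{Panel-Cost}(q,S)$ (minimizers are assumed to exist). $\mathcal U_{k,n}$ is the uniform distribution over subsets of $[n]$ of size $k$. *)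

theory Defs
  imports "HOL-Probability.Probability"
begin

definition unit_metric_on :: "'a set \<Rightarrow> ('a \<Rightarrow> 'a \<Rightarrow> real) \<Rightarrow> bool" where
  "unit_metric_on X d \<longleftrightarrow>
     (\<forall>x\<in>X. \<forall>y\<in>X. 0 \<le> d x y \<and> d x y \<le> 1) \<and>
     (\<forall>x\<in>X. \<forall>y\<in>X. d x y = 0 \<longleftrightarrow> x = y) \<and>
     (\<forall>x\<in>X. \<forall>y\<in>X. d x y = d y x) \<and>
     (\<forall>x\<in>X. \<forall>y\<in>X. \<forall>z\<in>X. d x z \<le> d x y + d y z)"

text \<open>Agents are indexed by {1..n}; xs i is the location of agent i.\<close>
definition social_cost :: "('a \<Rightarrow> 'a \<Rightarrow> real) \<Rightarrow> (nat \<Rightarrow> 'a) \<Rightarrow> nat \<Rightarrow> 'a \<Rightarrow> real" where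
  "social_cost d xs n q = (\<Sum>i\<in>{1..n}. d q (xs i)) / real n"

definition social_opt :: "('a \<Rightarrow> 'a \<Rightarrow> real) \<Rightarrow> 'a set \<Rightarrow> (nat \<Rightarrow> 'a) \<Rightarrow> nat \<Rightarrow> real" where
  "social_opt d C xs n = (INF q\<in>C. social_cost d xs n q)"

definition panel_cost :: "('a \<Rightarrow> 'a \<Rightarrow> real) \<Rightarrow> (nat \<Rightarrow> 'a) \<Rightarrow> nat set \<Rightarrow> 'a \<Rightarrow> real" where
  "panel_cost d xs S q = (\<Sum>i\<in>S. d q (xs i)) / real (card S)"

definition panels :: "nat \<Rightarrow> nat \<Rightarrow> nat set set" where
  "panels k n = {S. S \<subseteq> {1..n} \<and> card S = k}"

definition uniform_panels :: "nat \<Rightarrow> nat \<Rightarrow> nat set pmf" where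
  "uniform_panels k n = pmf_of_set (panels k n)"

end

theory Submission
  imports Defs
begin

text \<open>If the panel optimum lies farther than r = T * OPT from qstar, then, because it serves the
  panel at least as well as qstar does, the triangle inequality forces the truncated distances
  min (d qstar (xs i)) r / r of the panel members to sum to at least k / 2, whereas their
  population mean is at most 1 / T. A Chernoff bound for drawing a k-subset without replacement
  (the exponential moment c powr z \<le> 1 + (c - 1) z together with Maclaurin's inequality for
  elementary symmetric sums) bounds the fraction of such panels by (4 (T - 1) / T^2) powr (k / 2)
  for c = T - 1, and this is at most \<delta> by the choice of k. If OPT = 0, all agents sit at qstar
  and hence so does every panel optimum.\<close>

definition elem_sym :: "nat \<Rightarrow> 'b set \<Rightarrow> ('b \<Rightarrow> real) \<Rightarrow> real" where
  "elem_sym k I v = (\<Sum>S | S \<subseteq> I \<and> card S = k. \<Prod>i\<in>S. v i)"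

lemma elem_sym_0 [simp]: "finite I \<Longrightarrow> elem_sym 0 I v = 1"
proof -
  assume "finite I"
  then have "{S. S \<subseteq> I \<and> card S = 0} = {{}}"
    by (auto dest: finite_subset)
  then show ?thesis
    by (simp add: elem_sym_def)
qed

lemma k_subsets_insert:
  assumes "finite I" "i \<notin> I"
  shows "{S. S \<subseteq> insert i I \<and> card S = Suc k} =
    {S. S \<subseteq> I \<and> card S = Suc k} \<union> insert i ` {S. S \<subseteq> I \<and> card S = k}"
proof (rule set_eqI, rule iffI)
  fix S assume S: "S \<in> {S. S \<subseteq> insert i I \<and> card S = Suc k}"
  show "S \<in> {S. S \<subseteq> I \<and> card S = Suc k} \<union> insert i ` {S. S \<subseteq> I \<and> card S = k}"
  proof (cases "i \<in> S")
    case True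
    then have "S = insert i (S - {i})" and "S - {i} \<subseteq> I" and "card (S - {i}) = k"
      using S assms by (auto dest: finite_subset)
    then show ?thesis by blast
  qed (use S in auto)
qed (use assms in \<open>auto simp: card_insert_if finite_subset subset_iff\<close>)

lemma elem_sym_insert:
  assumes fin: "finite I" and i: "i \<notin> I"
  shows "elem_sym (Suc k) (insert i I) v = elem_sym (Suc k) I v + v i * elem_sym k I v"
proof -
  let ?A = "{S. S \<subseteq> I \<and> card S = Suc k}" and ?B = "{S. S \<subseteq> I \<and> card S = k}"
  have "inj_on (insert i) ?B"
    using i by (intro inj_onI) (metis Diff_insert_absorb subsetD mem_Collect_eq)
  moreover have "?A \<inter> insert i ` ?B = {}"
    using i by auto
  moreover have "(\<Prod>j\<in>insert i S. v j) = v i * (\<Prod>j\<in>S. v j)" if "S \<in> ?B" for S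
    using that fin i by (auto intro: prod.insert dest: finite_subset)
  ultimately show ?thesis
    using fin i unfolding elem_sym_def k_subsets_insert[OF fin i]
    by (simp add: sum.union_disjoint sum.reindex sum_distrib_left)
qed

lemma pow_ge_tangent:
  fixes a x :: real
  assumes "0 \<le> a" "0 \<le> x"
  shows "a ^ Suc K + real (Suc K) * a ^ K * (x - a) \<le> x ^ Suc K"
proof (induction K)
  case (Suc K)
  have "a ^ Suc (Suc K) + real (Suc (Suc K)) * a ^ Suc K * (x - a)
      = x * (a ^ Suc K + real (Suc K) * a ^ K * (x - a)) - real (Suc K) * a ^ K * (x - a)\<^sup>2"
    by (simp add: algebra_simps power2_eq_square)
  also have "\<dots> \<le> x * x ^ Suc K"
    using mult_left_mono[OF Suc \<open>0 \<le> x\<close>] assms by (simp add: diff_le_eq add_increasing2)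
  finally show ?case
    by simp
qed simp

text \<open>Maclaurin's inequality; the induction step is the tangent-line bound for t \<mapsto> t^k
  at the old mean.\<close>
lemma elem_sym_le_binomial_mean_pow:
  assumes "finite I" "\<forall>i\<in>I. 0 \<le> v i"
  shows "elem_sym k I v \<le> real (card I choose k) * (sum v I / card I) ^ k"
  using assms
proof (induction I arbitrary: k rule: finite_induct)
  case empty
  then show ?case
    by (cases k) (simp_all add: elem_sym_def[of "Suc _"])
next
  case (insert i I)
  show ?case
  proof (cases k)
    case 0
    with insert show ?thesis by simp
  next
    case (Suc K)
    define m where "m = card I"
    define a where "a = sum v I / m"
    define b where "b = (sum v I + v i) / (m + 1)"
    have vi: "0 \<le> v i" and a: "0 \<le> a" and b: "0 \<le> b"
      using insert.prems by (simp_all add: a_def b_def sum_nonneg)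
    have "sum v I = m * a"
      using insert.hyps by (cases "m = 0") (simp_all add: a_def m_def)
    then have b_minus_a: "(m + 1) * (b - a) = v i - a"
      by (simp add: b_def field_simps)
    have binom: "real (Suc m choose Suc K) * real (Suc K) = (m + 1) * real (m choose K)"
      using arg_cong[OF Suc_times_binomial_eq[of m K], of real] by (simp add: algebra_simps)
    have "elem_sym k (insert i I) v = elem_sym (Suc K) I v + v i * elem_sym K I v"
      unfolding Suc by (rule elem_sym_insert[OF insert.hyps])
    also have "\<dots> \<le> real (m choose Suc K) * a ^ Suc K + v i * (real (m choose K) * a ^ K)"
    proof -
      have "elem_sym j I v \<le> real (m choose j) * a ^ j" for j
        unfolding m_def a_def by (rule insert.IH) (use insert.prems in simp)
      then show ?thesis
        by (intro add_mono mult_left_mono vi)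
    qed
    also have "\<dots> = real (Suc m choose Suc K) * (a ^ Suc K + real (Suc K) * a ^ K * (b - a))"
    proof -
      have "real (Suc m choose Suc K) * (real (Suc K) * a ^ K * (b - a))
          = real (m choose K) * a ^ K * ((m + 1) * (b - a))"
        by (simp only: mult.assoc[symmetric] binom) (simp only: ac_simps)
      also have "\<dots> = real (m choose K) * a ^ K * (v i - a)"
        by (simp only: b_minus_a)
      finally show ?thesis
        by (simp add: algebra_simps)
    qed
    also have "\<dots> \<le> real (Suc m choose Suc K) * b ^ Suc K"
      using pow_ge_tangent[OF a b] by (simp add: mult_left_mono)
    finally show ?thesis
      using insert.hyps by (simp add: Suc m_def b_def add.commute)
  qed
qed

lemma powr_le_affine:
  fixes c z :: real
  assumes "0 < c" "0 \<le> z" "z \<le> 1"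
  shows "c powr z \<le> 1 + (c - 1) * z"
proof -
  have "exp ((1 - z) *\<^sub>R 0 + z *\<^sub>R ln c) \<le> (1 - z) * exp 0 + z * exp (ln c)"
    by (rule convex_onD[OF exp_convex]) (use assms in auto)
  with assms show ?thesis
    by (simp add: powr_def algebra_simps)
qed

lemma card_subsets_sum_ge_le:
  fixes z :: "'b \<Rightarrow> real" and c t :: real
  assumes I: "finite I" and z: "\<forall>i\<in>I. 0 \<le> z i \<and> z i \<le> 1" and c: "1 \<le> c"
  shows "card {S. S \<subseteq> I \<and> card S = k \<and> t \<le> sum z S}
    \<le> real (card I choose k) * (1 + (c - 1) * (sum z I / card I)) ^ k / c powr t"
proof -
  define v where "v i = 1 + (c - 1) * z i" for i
  define K where "K = {S. S \<subseteq> I \<and> card S = k}"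
  have v: "\<forall>i\<in>I. 0 \<le> v i"
    using z c by (simp add: v_def)
  have "finite K"
    using I by (simp add: K_def)
  have large: "1 \<le> (\<Prod>i\<in>S. v i) / c powr t" if "S \<in> K" "t \<le> sum z S" for S
  proof -
    have S: "finite S" "S \<subseteq> I"
      using that I by (auto simp: K_def dest: finite_subset)
    have "c powr t \<le> c powr sum z S"
      using that c by (intro powr_mono) auto
    also have "\<dots> = (\<Prod>i\<in>S. c powr z i)"
      using c by (simp add: powr_sum)
    also have "\<dots> \<le> (\<Prod>i\<in>S. v i)"
      using S z c by (intro prod_mono) (auto simp: v_def intro!: powr_le_affine)
    finally show ?thesis
      using c by simp
  qed
  have "real (card {S \<in> K. t \<le> sum z S})
      \<le> (\<Sum>S \<in> {S \<in> K. t \<le> sum z S}. (\<Prod>i\<in>S. v i) / c powr t)"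
    using large by (subst real_of_card) (intro sum_mono, auto)
  also have "\<dots> \<le> (\<Sum>S\<in>K. (\<Prod>i\<in>S. v i) / c powr t)"
    using \<open>finite K\<close> v
    by (intro sum_mono2) (auto simp: K_def intro!: prod_nonneg divide_nonneg_nonneg)
  also have "\<dots> = elem_sym k I v / c powr t"
    by (simp add: elem_sym_def K_def sum_divide_distrib)
  also have "\<dots> \<le> real (card I choose k) * (sum v I / card I) ^ k / c powr t"
    by (intro divide_right_mono elem_sym_le_binomial_mean_pow I v) simp
  also have "\<dots> \<le> real (card I choose k) * (1 + (c - 1) * (sum z I / card I)) ^ k / c powr t"
  proof -
    have "sum v I = card I + (c - 1) * sum z I"
      by (simp add: v_def sum.distrib sum_distrib_left)
    then have "sum v I / card I \<le> 1 + (c - 1) * (sum z I / card I)"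
      by (cases "card I = 0") (simp_all add: add_divide_distrib)
    then show ?thesis
      using v by (intro divide_right_mono mult_left_mono power_mono) (auto simp: sum_nonneg)
  qed
  finally show ?thesis
    by (simp add: K_def)
qed

text \<open>With D = d p q, every point satisfies
  D (r - 2 min (d p (y i)) r) \<le> r (d q (y i) - d p (y i)) by the two triangle inequalities
  through y i; summing, the right-hand side is nonpositive because q serves the points at least
  as well as p.\<close>
lemma sum_min_dist_ge_half:
  fixes d :: "'a \<Rightarrow> 'a \<Rightarrow> real" and y :: "'b \<Rightarrow> 'a" and r :: real
  assumes d: "unit_metric_on X d" and p: "p \<in> X" and q: "q \<in> X" and y: "\<forall>i\<in>S. y i \<in> X"
    and better: "(\<Sum>i\<in>S. d q (y i)) \<le> (\<Sum>i\<in>S. d p (y i))"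
    and r: "0 < r" "r \<le> d p q"
  shows "card S * r \<le> 2 * (\<Sum>i\<in>S. min (d p (y i)) r)"
proof -
  define D where "D = d p q"
  have D: "0 < D"
    using r by (simp add: D_def)
  have pointwise: "D * (r - 2 * min (d p (y i)) r) \<le> r * (d q (y i) - d p (y i))" if "i \<in> S" for i
  proof -
    define a b where "a = d p (y i)" and "b = d q (y i)"
    have "y i \<in> X"
      using y that by blast
    then have "D \<le> a + b" "a \<le> D + b" "0 \<le> a"
      using d p q unfolding unit_metric_on_def D_def a_def b_def by metis+
    then have "r * (- D) \<le> r * (b - a)" "r * (D - 2 * a) \<le> r * (b - a)" "a * r \<le> a * D"
      using r unfolding D_def[symmetric] by (intro mult_left_mono; linarith)+
    then show ?thesis
      unfolding a_def[symmetric] b_def[symmetric] min_def by (simp add: algebra_simps)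
  qed
  have "D * (card S * r - 2 * (\<Sum>i\<in>S. min (d p (y i)) r))
      = (\<Sum>i\<in>S. D * (r - 2 * min (d p (y i)) r))"
    by (simp add: sum_subtractf sum_distrib_left algebra_simps)
  also have "\<dots> \<le> (\<Sum>i\<in>S. r * (d q (y i) - d p (y i)))"
    by (rule sum_mono) (rule pointwise)
  also have "\<dots> = r * ((\<Sum>i\<in>S. d q (y i)) - (\<Sum>i\<in>S. d p (y i)))"
    by (simp add: sum_subtractf sum_distrib_left right_diff_distrib)
  also have "\<dots> \<le> 0"
    using r better by (simp add: mult_nonneg_nonpos)
  finally show ?thesis
    using D by (simp add: mult_le_0_iff)
qed

lemma chernoff_rate_le:
  fixes T \<delta> :: real and k :: nat
  assumes T: "T > 2" and \<delta>: "0 < \<delta>"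
    and k: "real k \<ge> 2 * ln (1 / \<delta>) / ln (T^2 / (4 * (T - 1)))"
  shows "(2 * (T - 1) / T) ^ k / (T - 1) powr (real k / 2) \<le> \<delta>"
proof -
  define \<rho> where "\<rho> = T^2 / (4 * (T - 1))"
  define \<beta> where "\<beta> = 2 * (T - 1) / T"
  have "0 < (T - 2)^2"
    using T by simp
  then have "1 < \<rho>"
    using T by (simp add: \<rho>_def power2_eq_square algebra_simps)
  have "0 < \<beta>"
    using T by (simp add: \<beta>_def)
  then have "2 * ln \<beta> = ln (\<beta>^2)"
    by (simp add: ln_realpow)
  also have "\<beta>^2 = (T - 1) / \<rho>"
    using T by (simp add: \<beta>_def \<rho>_def field_simps power2_eq_square)
  also have "ln ((T - 1) / \<rho>) = ln (T - 1) - ln \<rho>"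
    using T \<open>1 < \<rho>\<close> by (intro ln_divide_pos) auto
  finally have ln_\<beta>: "2 * ln \<beta> = ln (T - 1) - ln \<rho>" .
  have "ln (\<beta> ^ k / (T - 1) powr (real k / 2))
      = real k / 2 * (2 * ln \<beta>) - real k / 2 * ln (T - 1)"
    using T by (simp add: \<beta>_def ln_div ln_realpow)
  also have "\<dots> = - (real k / 2) * ln \<rho>"
    unfolding ln_\<beta> by (simp add: algebra_simps)
  also have "\<dots> \<le> ln \<delta>"
  proof -
    have "2 * ln (1 / \<delta>) / ln \<rho> \<le> real k"
      using k by (simp only: \<rho>_def)
    then have "2 * ln (1 / \<delta>) \<le> real k * ln \<rho>"
      using \<open>1 < \<rho>\<close> by (simp add: pos_divide_le_eq)
    then show ?thesis
      using \<delta> by (simp add: ln_div)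
  qed
  finally show ?thesis
    using T \<delta> by (simp add: \<beta>_def)
qed

lemma
  shows finite_panels: "finite (panels k n)"
    and card_panels: "card (panels k n) = n choose k"
  by (simp_all add: panels_def n_subsets)

locale facility_location =
  fixes X C :: "'a set" and d :: "'a \<Rightarrow> 'a \<Rightarrow> real"
    and xs :: "nat \<Rightarrow> 'a" and n k :: nat
    and qstar :: 'a and qbar :: "nat set \<Rightarrow> 'a"
  assumes metric: "unit_metric_on X d"
    and C_sub: "C \<subseteq> X"
    and agents: "\<forall>i\<in>{1..n}. xs i \<in> X"
    and qstar_in: "qstar \<in> C"
    and qstar_opt: "\<forall>q\<in>C. social_cost d xs n qstar \<le> social_cost d xs n q"
    and qbar_in: "\<forall>S\<in>panels k n. qbar S \<in> C"
    and qbar_opt: "\<forall>S\<in>panels k n. \<forall>q\<in>C. panel_cost d xs S (qbar S) \<le> panel_cost d xs S q"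
begin

lemma dist_qstar_nonneg: "i \<in> {1..n} \<Longrightarrow> 0 \<le> d qstar (xs i)"
  using metric agents qstar_in C_sub by (auto simp: unit_metric_on_def)

lemma social_opt_eq: "social_opt d C xs n = (\<Sum>i\<in>{1..n}. d qstar (xs i)) / n"
proof -
  have "social_opt d C xs n = social_cost d xs n qstar"
    unfolding social_opt_def by (rule cInf_eq_minimum) (use qstar_in qstar_opt in auto)
  then show ?thesis
    by (simp add: social_cost_def)
qed

lemma panel_sum_min_ge:
  fixes r :: real
  assumes S: "S \<in> panels k n" and r: "0 < r" "r \<le> d qstar (qbar S)"
  shows "k * r \<le> 2 * (\<Sum>i\<in>S. min (d qstar (xs i)) r)"
proof -
  have S_sub: "S \<subseteq> {1..n}" and card_S: "card S = k"
    using S by (simp_all add: panels_def)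
  have better: "(\<Sum>i\<in>S. d (qbar S) (xs i)) \<le> (\<Sum>i\<in>S. d qstar (xs i))"
  proof (cases "k = 0")
    case True
    then have "S = {}"
      using S_sub card_S by (auto dest: finite_subset)
    then show ?thesis by simp
  next
    case False
    have "panel_cost d xs S (qbar S) \<le> panel_cost d xs S qstar"
      using qbar_opt qstar_in S by blast
    with False show ?thesis
      using card_S by (simp add: panel_cost_def divide_le_cancel)
  qed
  have in_X: "qstar \<in> X" "qbar S \<in> X" "\<forall>i\<in>S. xs i \<in> X"
    using qstar_in qbar_in C_sub agents S S_sub by auto
  show ?thesis
    using sum_min_dist_ge_half[OF metric in_X better r] card_S by simp
qed

lemma panel_opt_eq_qstar_if_social_opt_0:
  assumes opt: "social_opt d C xs n = 0" and k: "0 < k" and S: "S \<in> panels k n"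
  shows "qbar S = qstar"
proof -
  have S_sub: "S \<subseteq> {1..n}"
    using S by (simp add: panels_def)
  have "(\<Sum>i\<in>{1..n}. d qstar (xs i)) = 0"
    using opt by (cases "n = 0") (simp_all add: social_opt_eq)
  then have "\<forall>i\<in>{1..n}. d qstar (xs i) = 0"
    using dist_qstar_nonneg by (subst (asm) sum_nonneg_eq_0_iff) auto
  then have zero: "d qstar (xs i) = 0" if "i \<in> S" for i
    using that S_sub by blast
  have "d qstar (qbar S) \<le> 0"
  proof (rule ccontr)
    assume "\<not> d qstar (qbar S) \<le> 0"
    then have "k * d qstar (qbar S) \<le> 2 * (\<Sum>i\<in>S. min (d qstar (xs i)) (d qstar (qbar S)))"
      by (intro panel_sum_min_ge S) auto
    with zero \<open>\<not> d qstar (qbar S) \<le> 0\<close> k show False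
      by (simp add: mult_le_0_iff)
  qed
  moreover have "qstar \<in> X" "qbar S \<in> X"
    using qstar_in qbar_in S C_sub by auto
  ultimately show ?thesis
    using metric unfolding unit_metric_on_def by (metis order_antisym)
qed

lemma card_far_panels_le:
  fixes T \<delta> :: real
  assumes T: "T > 2" and \<delta>: "0 < \<delta>" "\<delta> < 1"
    and k_ge: "real k \<ge> 2 * ln (1 / \<delta>) / ln (T^2 / (4 * (T - 1)))"
  shows "card {S \<in> panels k n. T * social_opt d C xs n < d qstar (qbar S)}
    \<le> \<delta> * card (panels k n)"
proof (cases "social_opt d C xs n = 0")
  case True
  have "(2 * (T - 1) / T) ^ k / (T - 1) powr (real k / 2) \<le> \<delta>"
    by (rule chernoff_rate_le[OF T \<delta>(1) k_ge])
  then have "0 < k"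
    using \<delta>(2) T by (cases k) auto
  moreover have "d qstar qstar = 0"
    using metric qstar_in C_sub by (auto simp: unit_metric_on_def)
  ultimately have "{S \<in> panels k n. T * social_opt d C xs n < d qstar (qbar S)} = {}"
    using True panel_opt_eq_qstar_if_social_opt_0 by auto
  then show ?thesis
    using \<delta> by (simp only: card.empty) simp
next
  case False
  define OPT where "OPT = social_opt d C xs n"
  define r where "r = T * OPT"
  define z where "z i = min (d qstar (xs i)) r / r" for i
  have "0 < n"
    using False by (auto simp: social_opt_eq)
  have "0 \<le> OPT"
    unfolding OPT_def social_opt_eq using dist_qstar_nonneg by (intro divide_nonneg_nonneg sum_nonneg) auto
  with False have "0 < OPT"
    by (simp add: OPT_def)
  then have r: "0 < r"
    using T by (simp add: r_def)
  have z: "\<forall>i\<in>{1..n}. 0 \<le> z i \<and> z i \<le> 1"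
    using r dist_qstar_nonneg by (simp add: z_def)
  have "sum z {1..n} \<le> (\<Sum>i\<in>{1..n}. d qstar (xs i)) / r"
    unfolding z_def sum_divide_distrib by (intro divide_right_mono sum_mono) (use r in auto)
  also have "\<dots> = n * OPT / (T * OPT)"
    using \<open>0 < n\<close> by (simp add: r_def OPT_def social_opt_eq)
  also have "\<dots> = n / T"
    using \<open>0 < OPT\<close> by simp
  finally have mean: "sum z {1..n} / card {1..n} \<le> 1 / T"
    using \<open>0 < n\<close> by (simp add: divide_le_eq)
  have "{S \<in> panels k n. T * OPT < d qstar (qbar S)}
      \<subseteq> {S. S \<subseteq> {1..n} \<and> card S = k \<and> real k / 2 \<le> sum z S}"
  proof safe
    fix S assume S: "S \<in> panels k n" "T * OPT < d qstar (qbar S)"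
    then have "k * r \<le> 2 * (\<Sum>i\<in>S. min (d qstar (xs i)) r)"
      using r by (intro panel_sum_min_ge) (auto simp: r_def)
    then show "real k / 2 \<le> sum z S"
      using r by (simp add: z_def sum_divide_distrib[symmetric] divide_simps)
  qed (auto simp: panels_def)
  then have "card {S \<in> panels k n. T * OPT < d qstar (qbar S)}
      \<le> card {S. S \<subseteq> {1..n} \<and> card S = k \<and> real k / 2 \<le> sum z S}"
    by (intro card_mono) auto
  also have "\<dots> \<le> real (n choose k) * (1 + (T - 2) * (sum z {1..n} / card {1..n})) ^ k
      / (T - 1) powr (real k / 2)"
    using card_subsets_sum_ge_le[of "{1..n}" z "T - 1" k "real k / 2"] z T by simp
  also have "\<dots> \<le> real (n choose k) * (2 * (T - 1) / T) ^ k / (T - 1) powr (real k / 2)"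
  proof -
    have "1 + (T - 2) * (sum z {1..n} / card {1..n}) \<le> 2 * (T - 1) / T"
      using mult_left_mono[OF mean, of "T - 2"] T by (simp add: field_simps)
    moreover have "0 \<le> 1 + (T - 2) * (sum z {1..n} / card {1..n})"
      using z T by (intro add_nonneg_nonneg mult_nonneg_nonneg divide_nonneg_nonneg sum_nonneg) auto
    ultimately show ?thesis
      by (intro divide_right_mono mult_left_mono power_mono) auto
  qed
  also have "\<dots> \<le> real (n choose k) * \<delta>"
    using mult_left_mono[OF chernoff_rate_le[OF T \<delta>(1) k_ge], of "real (n choose k)"] by simp
  finally show ?thesis
    by (simp add: OPT_def card_panels mult.commute)
qed

end

theorem theorem4p2:
  fixes X C :: "'a set" and d :: "'a \<Rightarrow> 'a \<Rightarrow> real"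
    and xs :: "nat \<Rightarrow> 'a" and n k :: nat
    and qstar :: 'a and qbar :: "nat set \<Rightarrow> 'a"
    and T \<delta> :: real
  assumes metric: "unit_metric_on X d"
    and C_sub: "C \<subseteq> X"
    and agents: "\<forall>i\<in>{1..n}. xs i \<in> X"
    and qstar_in: "qstar \<in> C"
    and qstar_opt: "\<forall>q\<in>C. social_cost d xs n qstar \<le> social_cost d xs n q"
    and qbar_in: "\<forall>S\<in>panels k n. qbar S \<in> C"
    and qbar_opt: "\<forall>S\<in>panels k n. \<forall>q\<in>C. panel_cost d xs S (qbar S) \<le> panel_cost d xs S q"
    and T: "T > 2"
    and delta: "0 < \<delta>" "\<delta> < 1"
    and k_le: "k \<le> n"
    and k_ge: "real k \<ge> 2 * ln (1 / \<delta>) / ln (T^2 / (4 * (T - 1)))"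
  shows "measure_pmf.prob (uniform_panels k n)
           {S. d qstar (qbar S) \<le> T * social_opt d C xs n} \<ge> 1 - \<delta>"
proof -
  interpret facility_location X C d xs n k qstar qbar
    using metric C_sub agents qstar_in qstar_opt qbar_in qbar_opt by unfold_locales
  define P where "P = panels k n"
  define good where "good = {S. d qstar (qbar S) \<le> T * social_opt d C xs n}"
  have P: "finite P" "0 < card P"
    using k_le by (simp_all add: P_def finite_panels card_panels)
  have far: "card (P - good) \<le> \<delta> * card P"
    using card_far_panels_le[OF T delta k_ge] by (simp add: P_def good_def set_diff_eq not_le)
  have "card (P \<inter> good) = card P - card (P - good)"
    using P card_Diff_subset[of "P - good" P] by (simp add: Diff_Diff_Int)
  then have card_good: "real (card (P \<inter> good)) = real (card P) - real (card (P - good))"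
    using P by (simp add: card_mono)
  have "measure_pmf.prob (uniform_panels k n) good = card (P \<inter> good) / card P"
    using P unfolding uniform_panels_def P_def[symmetric] by (intro measure_pmf_of_set) auto
  also have "\<dots> \<ge> 1 - \<delta>"
    using far P unfolding card_good by (auto simp: diff_divide_distrib pos_divide_le_eq)
  finally show ?thesis
    by (simp add: good_def)
qed

end
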